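(* Let $k\le n$ be positive integers and let $\mathbb F$ be a field with at least $n+k-1$ elements. Then $J_{n,k}\subseteq \mathbf T(Z_{n,k})$.
   Context: $\mathbb F[\mathbf x_n]=\mathbb F[x_1,\dots,x_n]$. $h_d(x_1,\dots,x_i)=\sum_{1\le j_1\le\cdots\le j_d\le i}x_{j_1}\cdots x_{j_d}$ is the complete homogeneous symmetric polynomial and $e_d(\mathbf x_n)=e_d(x_1,\dots,x_n)$ the elementary symmetric polynomial. $J_{n,k}\subseteq\mathbb F[\mathbf x_n]$ is the ideal generated by $h_k(x_1),h_k(x_1,x_2),\dots,h_k(x_1,\dots,x_n)$ and $e_n(\mathbf x_n),e_{n-1}(\mathbf x_n),\dots,e_{n-k+1}(\mathbf x_n)$. Fix distinct elements $\alpha_1,\dots,\alpha_{n+k-1}\in\mathbb F$. $Z_{n,k}\subseteq\mathbb F^n$ is the set of points $(z_1,\dots,z_n)$ such that $z_i\in\{\alpha_1,\dots,\alpha_{k+i-1}\}$ for each $1\le i\le n$, the coordinates $z_1,\dots,z_n$ are pairwise distinct, and $\{\alpha_1,\dots,\alpha_k\}\subseteq\{z_1,\dots,z_n\}$. For a finite $Z\subseteq\mathbb F^n$, $\mathbf I(Z)$ is the ideal of polynomials vanishing on $Z$; for nonzero $f$, $\tau(f)$ denotes its top-degree homogeneous component; and $\mathbf T(Z)$ is the ideal generated by $\{\tau(f): f\in\mathbf I(Z)\setminus\{0\}\}$. *)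

theory Defs
  imports Main "HOL-Library.Poly_Mapping"
begin

text \<open>Multivariate polynomials over a field, represented as finitely supported maps
from monomials (exponent vectors, finitely supported nat to nat maps) to coefficients.
The variable x_i is the monomial with exponent 1 at index i (indices 1..n).\<close>

type_synonym 'a mpoly = "(nat \<Rightarrow>\<^sub>0 nat) \<Rightarrow>\<^sub>0 'a"

definition Var :: "nat \<Rightarrow> 'a::comm_ring_1 mpoly" where
  "Var i = Poly_Mapping.single (Poly_Mapping.single i 1) 1"

definition mdeg :: "(nat \<Rightarrow>\<^sub>0 nat) \<Rightarrow> nat" where
  "mdeg m = (\<Sum>i\<in>Poly_Mapping.keys m. Poly_Mapping.lookup m i)"

definition Pn :: "nat \<Rightarrow> 'a::comm_ring_1 mpoly set" where
  "Pn n = {p. \<forall>m\<in>Poly_Mapping.keys p. Poly_Mapping.keys m \<subseteq> {1..n}}"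

definition ideal_gen :: "nat \<Rightarrow> 'a::comm_ring_1 mpoly set \<Rightarrow> 'a mpoly set" where
  "ideal_gen n S = {(\<Sum>g\<in>F. c g * g) | F c. finite F \<and> F \<subseteq> S \<and> (\<forall>g\<in>F. c g \<in> Pn n)}"

definition eval :: "'a::comm_ring_1 mpoly \<Rightarrow> (nat \<Rightarrow> 'a) \<Rightarrow> 'a" where
  "eval p z = (\<Sum>m\<in>Poly_Mapping.keys p. Poly_Mapping.lookup p m * (\<Prod>i\<in>Poly_Mapping.keys m. z i ^ Poly_Mapping.lookup m i))"

definition tdeg :: "'a::zero mpoly \<Rightarrow> nat" where
  "tdeg p = Max (mdeg ` Poly_Mapping.keys p)"

definition tau :: "'a::comm_ring_1 mpoly \<Rightarrow> 'a mpoly" where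
  "tau p = (\<Sum>m\<in>{m\<in>Poly_Mapping.keys p. mdeg m = tdeg p}. Poly_Mapping.single m (Poly_Mapping.lookup p m))"

definition hsym :: "nat \<Rightarrow> nat \<Rightarrow> 'a::comm_ring_1 mpoly" where
  "hsym d i = (\<Sum>m\<in>{m. Poly_Mapping.keys m \<subseteq> {1..i} \<and> mdeg m = d}. Poly_Mapping.single m 1)"

definition esym :: "nat \<Rightarrow> nat \<Rightarrow> 'a::comm_ring_1 mpoly" where
  "esym d n = (\<Sum>S\<in>{S. S \<subseteq> {1..n} \<and> card S = d}. (\<Prod>i\<in>S. Var i))"

definition J :: "nat \<Rightarrow> nat \<Rightarrow> 'a::comm_ring_1 mpoly set" where
  "J n k = ideal_gen n ((\<lambda>i. hsym k i) ` {1..n} \<union> (\<lambda>d. esym d n) ` {n-k+1..n})"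

text \<open>points of F^n are represented as functions nat \<Rightarrow> F, with coordinates 1..n,
  normalized to 0 outside {1..n}\<close>
definition Z :: "nat \<Rightarrow> nat \<Rightarrow> (nat \<Rightarrow> 'a) \<Rightarrow> (nat \<Rightarrow> 'a::field) set" where
  "Z n k \<alpha> = {z. (\<forall>i. i \<notin> {1..n} \<longrightarrow> z i = 0)
      \<and> (\<forall>i\<in>{1..n}. z i \<in> \<alpha> ` {1..k+i-1})
      \<and> inj_on z {1..n}
      \<and> \<alpha> ` {1..k} \<subseteq> z ` {1..n}}"

definition vanishing_ideal :: "nat \<Rightarrow> (nat \<Rightarrow> 'a) set \<Rightarrow> 'a::comm_ring_1 mpoly set" where
  "vanishing_ideal n Zs = {p\<in>Pn n. \<forall>z\<in>Zs. eval p z = 0}"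

definition T :: "nat \<Rightarrow> (nat \<Rightarrow> 'a) set \<Rightarrow> 'a::comm_ring_1 mpoly set" where
  "T n Zs = ideal_gen n (tau ` (vanishing_ideal n Zs - {0}))"

end

theory Submission
  imports Defs "HOL-Computational_Algebra.Formal_Power_Series"
begin

text \<open>Every generator \<open>g\<close> of \<open>J n k\<close> is the top component of a polynomial
  vanishing on \<open>Z n k \<alpha>\<close>. The generators come in families \<open>(g_e)\<close> with \<open>g_e\<close>
  homogeneous of degree \<open>e\<close>: the complete homogeneous \<open>h_e(x_1,...,x_i)\<close> and the
  elementary \<open>e_e(x_1,...,x_n)\<close>. For a power series \<open>C\<close> with \<open>C(0) = 1\<close> the polynomial
  \<open>f = \<Sum>_j C_j g_(d-j)\<close> has top component \<open>g_d\<close>, and \<open>f(z)\<close> is the coefficient of \<open>t^d\<close>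
  in \<open>C(t) G_z(t)\<close>, where \<open>G_z(t) = \<Sum>_e g_e(z) t^e\<close>.
  For \<open>h\<close> the series \<open>G_z\<close> is \<open>\<Prod>_(l\<le>i) 1/(1 - z_l t)\<close>; with
  \<open>C(t) = \<Prod>_(j\<le>k+i-1) (1 - \<alpha>_j t)\<close> the product \<open>C G_z\<close> is the product of the
  \<open>(1 - \<alpha>_j t)\<close> over the \<open>k - 1\<close> values \<open>\<alpha>_j\<close> not among \<open>z_1,...,z_i\<close>, so its
  coefficient of \<open>t^k\<close> vanishes. For \<open>e\<close> the series \<open>G_z\<close> is \<open>\<Prod>_(l\<le>n) (1 + z_l t)\<close>;
  with \<open>C(t) = \<Prod>_(j\<le>k) 1/(1 + \<alpha>_j t)\<close> the factors of \<open>\<alpha>_1,...,\<alpha>_k\<close>, which all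
  occur among the \<open>z_l\<close>, cancel, leaving a polynomial of degree \<open>n - k < d\<close>.\<close>

unbundle fps_syntax

definition eval_monomial :: "(nat \<Rightarrow>\<^sub>0 nat) \<Rightarrow> (nat \<Rightarrow> 'a::comm_ring_1) \<Rightarrow> 'a" where
  "eval_monomial m z = (\<Prod>i\<in>Poly_Mapping.keys m. z i ^ Poly_Mapping.lookup m i)"

lemma eval_monomial_superset:
  assumes "finite S" "Poly_Mapping.keys m \<subseteq> S"
  shows "eval_monomial m z = (\<Prod>i\<in>S. z i ^ Poly_Mapping.lookup m i)"
  unfolding eval_monomial_def
  by (rule prod.mono_neutral_left[OF assms]) (auto simp: in_keys_iff)

lemma eval_monomial_add: "eval_monomial (a + b) z = eval_monomial a z * eval_monomial b z"
proof -
  let ?S = "Poly_Mapping.keys a \<union> Poly_Mapping.keys b"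
  have "eval_monomial (a + b) z = (\<Prod>i\<in>?S. z i ^ Poly_Mapping.lookup (a + b) i)"
    by (rule eval_monomial_superset) (use keys_add[of a b] in auto)
  also have "\<dots> = (\<Prod>i\<in>?S. z i ^ Poly_Mapping.lookup a i) * (\<Prod>i\<in>?S. z i ^ Poly_Mapping.lookup b i)"
    by (simp add: lookup_add power_add prod.distrib)
  also have "\<dots> = eval_monomial a z * eval_monomial b z"
    using eval_monomial_superset[of ?S a z] eval_monomial_superset[of ?S b z] by simp
  finally show ?thesis .
qed

lemma eval_monomial_single [simp]: "eval_monomial (Poly_Mapping.single l j) z = z l ^ j"
  by (simp add: eval_monomial_def)

lemma eval_monomial_zero [simp]: "eval_monomial 0 z = 1"
  by (simp add: eval_monomial_def)

lemma eval_eq_sum_monomials: "eval p z = (\<Sum>m\<in>Poly_Mapping.keys p. Poly_Mapping.lookup p m * eval_monomial m z)"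
  by (simp add: eval_def eval_monomial_def)

lemma eval_superset:
  assumes "finite S" "Poly_Mapping.keys p \<subseteq> S"
  shows "eval p z = (\<Sum>m\<in>S. Poly_Mapping.lookup p m * eval_monomial m z)"
  unfolding eval_eq_sum_monomials
  by (rule sum.mono_neutral_left[OF assms]) (auto simp: in_keys_iff)

lemma eval_add: "eval (p + q) z = eval p z + eval q z"
proof -
  let ?S = "Poly_Mapping.keys p \<union> Poly_Mapping.keys q"
  have "eval (p + q) z = (\<Sum>m\<in>?S. Poly_Mapping.lookup (p + q) m * eval_monomial m z)"
    by (rule eval_superset) (use keys_add[of p q] in auto)
  also have "\<dots> = eval p z + eval q z"
    using eval_superset[of ?S p z] eval_superset[of ?S q z]
    by (simp add: lookup_add distrib_right sum.distrib)
  finally show ?thesis .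
qed

lemma eval_zero [simp]: "eval 0 z = 0"
  by (simp add: eval_def)

lemma eval_sum: "eval (\<Sum>i\<in>I. f i) z = (\<Sum>i\<in>I. eval (f i) z)"
  by (induction I rule: infinite_finite_induct) (simp_all add: eval_add)

lemma eval_single_term [simp]: "eval (Poly_Mapping.single m c) z = c * eval_monomial m z"
  by (simp add: eval_eq_sum_monomials)

lemma poly_mapping_sum_single:
  "p = (\<Sum>m\<in>Poly_Mapping.keys p. Poly_Mapping.single m (Poly_Mapping.lookup p m))"
proof (rule poly_mapping_eqI)
  fix k
  show "Poly_Mapping.lookup p k =
      Poly_Mapping.lookup (\<Sum>m\<in>Poly_Mapping.keys p. Poly_Mapping.single m (Poly_Mapping.lookup p m)) k"
    by (cases "k \<in> Poly_Mapping.keys p") (auto simp: lookup_sum lookup_single when_def in_keys_iff)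
qed

lemma eval_mult: "eval (p * q) z = eval p z * eval (q :: 'a::comm_ring_1 mpoly) z"
proof -
  have "p * q = (\<Sum>a\<in>Poly_Mapping.keys p. \<Sum>b\<in>Poly_Mapping.keys q.
      Poly_Mapping.single a (Poly_Mapping.lookup p a) * Poly_Mapping.single b (Poly_Mapping.lookup q b))"
    by (subst poly_mapping_sum_single[of p], subst poly_mapping_sum_single[of q]) (rule sum_product)
  then have "eval (p * q) z = (\<Sum>a\<in>Poly_Mapping.keys p. \<Sum>b\<in>Poly_Mapping.keys q.
      (Poly_Mapping.lookup p a * eval_monomial a z) * (Poly_Mapping.lookup q b * eval_monomial b z))"
    by (simp add: eval_sum mult_single eval_monomial_add algebra_simps)
  also have "\<dots> = eval p z * eval q z"
    by (simp add: eval_eq_sum_monomials sum_product)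
  finally show ?thesis .
qed

lemma eval_one [simp]: "eval 1 z = 1"
  by (metis single_one eval_single_term eval_monomial_zero mult_1)

lemma eval_prod: "eval (\<Prod>i\<in>I. f i) z = (\<Prod>i\<in>I. eval (f i) z)"
  by (induction I rule: infinite_finite_induct) (simp_all add: eval_mult)

lemma eval_Var [simp]: "eval (Var i) z = z i"
  by (simp add: Var_def)

lemma mdeg_superset:
  assumes "finite S" "Poly_Mapping.keys m \<subseteq> S"
  shows "mdeg m = (\<Sum>i\<in>S. Poly_Mapping.lookup m i)"
  unfolding mdeg_def
  by (rule sum.mono_neutral_left[OF assms]) (auto simp: in_keys_iff)

lemma mdeg_add: "mdeg (a + b) = mdeg a + mdeg b"
proof -
  let ?S = "Poly_Mapping.keys a \<union> Poly_Mapping.keys b"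
  have "mdeg (a + b) = (\<Sum>i\<in>?S. Poly_Mapping.lookup (a + b) i)"
    by (rule mdeg_superset) (use keys_add[of a b] in auto)
  also have "\<dots> = mdeg a + mdeg b"
    using mdeg_superset[of ?S a] mdeg_superset[of ?S b]
    by (simp add: lookup_add sum.distrib)
  finally show ?thesis .
qed

lemma mdeg_single [simp]: "mdeg (Poly_Mapping.single l j) = j"
  by (simp add: mdeg_def)

lemma mdeg_zero [simp]: "mdeg 0 = 0"
  by (simp add: mdeg_def)

definition homogeneous :: "nat \<Rightarrow> 'a::zero mpoly \<Rightarrow> bool" where
  "homogeneous d p \<longleftrightarrow> (\<forall>m\<in>Poly_Mapping.keys p. mdeg m = d)"

lemma tau_homogeneous_add_lower:
  fixes g r :: "'a::comm_ring_1 mpoly"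
  assumes "g \<noteq> 0" and "homogeneous d g"
    and lower: "\<And>m. m \<in> Poly_Mapping.keys r \<Longrightarrow> mdeg m < d"
  shows "tau (g + r) = g" and "g + r \<noteq> 0"
proof -
  have g_deg: "mdeg m = d" if "m \<in> Poly_Mapping.keys g" for m
    using assms(2) that by (simp add: homogeneous_def)
  have r_top: "Poly_Mapping.lookup r m = 0" if "mdeg m = d" for m
    using lower[of m] that by (auto simp: in_keys_iff)
  have keys_g: "Poly_Mapping.keys g \<subseteq> Poly_Mapping.keys (g + r)"
    using g_deg r_top by (auto simp: in_keys_iff lookup_add)
  have keys_gr: "Poly_Mapping.keys (g + r) \<subseteq> Poly_Mapping.keys g \<union> Poly_Mapping.keys r"
    by (rule keys_add)
  obtain m0 where m0: "m0 \<in> Poly_Mapping.keys g"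
    using \<open>g \<noteq> 0\<close> keys_eq_empty by blast
  then show "g + r \<noteq> 0"
    using keys_g by auto
  have "tdeg (g + r) = d"
    unfolding tdeg_def
    using m0 keys_g keys_gr g_deg lower by (intro Max_eqI) force+
  then have "{m \<in> Poly_Mapping.keys (g + r). mdeg m = tdeg (g + r)} = Poly_Mapping.keys g"
    using keys_g keys_gr g_deg lower by fastforce
  then have "tau (g + r) =
      (\<Sum>m\<in>Poly_Mapping.keys g. Poly_Mapping.single m (Poly_Mapping.lookup (g + r) m))"
    by (simp add: tau_def)
  also have "\<dots> = (\<Sum>m\<in>Poly_Mapping.keys g. Poly_Mapping.single m (Poly_Mapping.lookup g m))"
    by (rule sum.cong) (auto simp: lookup_add r_top g_deg)
  finally show "tau (g + r) = g"
    by (simp flip: poly_mapping_sum_single)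
qed

section \<open>Top components of convolutions with a power series\<close>

definition convolution :: "'a::comm_ring_1 fps \<Rightarrow> (nat \<Rightarrow> 'a mpoly) \<Rightarrow> nat \<Rightarrow> 'a mpoly" where
  "convolution C p d = (\<Sum>j\<in>{0..d}. Poly_Mapping.single 0 (C $ j) * p (d - j))"

lemma keys_const_mult:
  "Poly_Mapping.keys (Poly_Mapping.single 0 c * p) \<subseteq> Poly_Mapping.keys (p :: 'a::comm_ring_1 mpoly)"
  using keys_mult[of "Poly_Mapping.single 0 c" p] by (auto split: if_splits)

lemma keys_sum_const_mult:
  "Poly_Mapping.keys (\<Sum>j\<in>A. Poly_Mapping.single 0 (c j) * q j) \<subseteq>
    (\<Union>j\<in>A. Poly_Mapping.keys (q j :: 'a::comm_ring_1 mpoly))"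
  using keys_sum[of "\<lambda>j. Poly_Mapping.single 0 (c j) * q j" A] keys_const_mult by blast

lemma tau_convolution:
  fixes p :: "nat \<Rightarrow> 'a::comm_ring_1 mpoly"
  assumes "C $ 0 = 1" and "p d \<noteq> 0" and homog: "\<And>e. homogeneous e (p e)"
  shows "tau (convolution C p d) = p d" and "convolution C p d \<noteq> 0"
proof -
  define r where "r = (\<Sum>j\<in>{1..d}. Poly_Mapping.single 0 (C $ j) * p (d - j))"
  have split: "convolution C p d = p d + r"
    using assms(1) by (simp add: convolution_def r_def sum.atLeast_Suc_atMost)
  have "mdeg m < d" if m: "m \<in> Poly_Mapping.keys r" for m
  proof -
    obtain j where "j \<in> {1..d}" "m \<in> Poly_Mapping.keys (p (d - j))"
      using m keys_sum_const_mult[of "\<lambda>j. C $ j" "\<lambda>j. p (d - j)" "{1..d}"]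
      unfolding r_def by blast
    then show ?thesis
      using homog[of "d - j"] by (auto simp: homogeneous_def)
  qed
  then show "tau (convolution C p d) = p d" and "convolution C p d \<noteq> 0"
    unfolding split using tau_homogeneous_add_lower[OF assms(2) homog] by auto
qed

lemma convolution_in_Pn:
  assumes "\<And>e. p e \<in> Pn n"
  shows "convolution C p d \<in> Pn n"
  using keys_sum_const_mult[of "\<lambda>j. C $ j" "\<lambda>j. p (d - j)" "{0..d}"] assms
  by (fastforce simp: Pn_def convolution_def)

lemma eval_convolution:
  "eval (convolution C p d) z = (C * Abs_fps (\<lambda>e. eval (p e) z)) $ d"
  by (simp add: convolution_def eval_sum eval_mult fps_mult_nth)

lemma top_component_in_leading_forms:
  fixes p :: "nat \<Rightarrow> 'a::comm_ring_1 mpoly"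
  assumes "C $ 0 = 1" and "p d \<noteq> 0" and "\<And>e. homogeneous e (p e)" and "\<And>e. p e \<in> Pn n"
    and vanish: "\<And>z. z \<in> Zs \<Longrightarrow> (C * Abs_fps (\<lambda>e. eval (p e) z)) $ d = 0"
  shows "p d \<in> tau ` (vanishing_ideal n Zs - {0})"
proof (rule image_eqI)
  show "p d = tau (convolution C p d)"
    using tau_convolution[OF assms(1-3)] by simp
  show "convolution C p d \<in> vanishing_ideal n Zs - {0}"
    using tau_convolution[OF assms(1-3)] convolution_in_Pn[OF assms(4)] vanish
    by (simp add: vanishing_ideal_def eval_convolution)
qed

lemma ideal_gen_mono: "S \<subseteq> S' \<Longrightarrow> ideal_gen n S \<subseteq> ideal_gen n S'"
  unfolding ideal_gen_def by blast

definition lin_fps :: "'a::comm_ring_1 \<Rightarrow> 'a fps" where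
  "lin_fps c = 1 + fps_const c * fps_X"

definition geom_fps :: "'a::comm_ring_1 \<Rightarrow> 'a fps" where
  "geom_fps c = Abs_fps (\<lambda>n. c ^ n)"

lemma lin_fps_mult_nth:
  "(lin_fps c * f) $ d = f $ d + (if d = 0 then 0 else c * f $ (d - 1))"
  by (simp add: lin_fps_def distrib_right mult.assoc)

lemma lin_fps_nth_0 [simp]: "lin_fps c $ 0 = 1"
  by (simp add: lin_fps_def)

lemma geom_fps_nth [simp]: "geom_fps c $ n = c ^ n"
  by (simp add: geom_fps_def)

lemma lin_fps_geom_fps: "lin_fps (- c) * geom_fps c = 1"
proof (rule fps_ext)
  fix n show "(lin_fps (- c) * geom_fps c) $ n = (1 :: 'a fps) $ n"
    by (cases n) (simp_all add: lin_fps_mult_nth)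
qed

lemma prod_fps_nth_0: "(\<Prod>x\<in>A. f x) $ 0 = (\<Prod>x\<in>A. (f x :: 'a::comm_ring_1 fps) $ 0)"
  by (induction A rule: infinite_finite_induct) (simp_all add: fps_mult_nth)

lemma prod_lin_fps_nth_above_card:
  "finite B \<Longrightarrow> card B < d \<Longrightarrow> (\<Prod>b\<in>B. lin_fps (c b)) $ d = 0"
proof (induction B arbitrary: d rule: finite_induct)
  case (insert b B)
  then show ?case by (simp add: lin_fps_mult_nth)
qed simp

lemma prod_mult_prod_inverses:
  fixes f g :: "'b \<Rightarrow> 'a::comm_monoid_mult"
  assumes "finite A" and "B \<subseteq> A" and "\<And>b. b \<in> B \<Longrightarrow> f b * g b = 1"
  shows "prod f A * prod g B = prod f (A - B)"
proof -
  have "prod f A * prod g B = prod f (A - B) * (\<Prod>b\<in>B. f b * g b)"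
    by (simp add: prod.subset_diff[OF assms(2,1)] prod.distrib mult.assoc)
  also have "\<dots> = prod f (A - B)"
    using assms(3) by simp
  finally show ?thesis .
qed

section \<open>Complete homogeneous symmetric polynomials\<close>

definition monomials_of_degree :: "nat \<Rightarrow> nat set \<Rightarrow> (nat \<Rightarrow>\<^sub>0 nat) set" where
  "monomials_of_degree d I = {m. Poly_Mapping.keys m \<subseteq> I \<and> mdeg m = d}"

lemma monomials_of_degree_empty:
  "monomials_of_degree d {} = (if d = 0 then {0} else {})"
  by (auto simp: monomials_of_degree_def)

lemma monomials_of_degree_insert:
  assumes l: "l \<notin> I"
  defines "ext \<equiv> \<lambda>(j, m). m + Poly_Mapping.single l j"
  shows "monomials_of_degree d (insert l I) =
      ext ` (SIGMA j:{..d}. monomials_of_degree (d - j) I)"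
    and "inj_on ext (SIGMA j:{..d}. monomials_of_degree (d - j) I)"
proof -
  have lookup_l: "Poly_Mapping.lookup m l = 0" if "m \<in> monomials_of_degree e I" for m e
    using that l by (auto simp: monomials_of_degree_def in_keys_iff)
  show "monomials_of_degree d (insert l I) = ext ` (SIGMA j:{..d}. monomials_of_degree (d - j) I)"
  proof (intro equalityI subsetI)
    fix m assume m: "m \<in> monomials_of_degree d (insert l I)"
    define j where "j = Poly_Mapping.lookup m l"
    define m' where "m' = Poly_Mapping.update l 0 m"
    have m_eq: "m = m' + Poly_Mapping.single l j"
      by (rule poly_mapping_eqI)
        (auto simp: m'_def j_def lookup_add lookup_update lookup_single when_def)
    have "Poly_Mapping.keys m' \<subseteq> I"
      using m by (auto simp: m'_def keys_update monomials_of_degree_def)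
    moreover have "mdeg m = mdeg m' + j"
      using m_eq mdeg_add by (metis mdeg_single)
    ultimately have "(j, m') \<in> (SIGMA j:{..d}. monomials_of_degree (d - j) I)"
      using m by (auto simp: monomials_of_degree_def)
    then show "m \<in> ext ` (SIGMA j:{..d}. monomials_of_degree (d - j) I)"
      using m_eq by (force simp: ext_def)
  next
    fix m assume "m \<in> ext ` (SIGMA j:{..d}. monomials_of_degree (d - j) I)"
    then show "m \<in> monomials_of_degree d (insert l I)"
      using keys_add by (fastforce simp: ext_def monomials_of_degree_def mdeg_add split: if_splits)
  qed
  show "inj_on ext (SIGMA j:{..d}. monomials_of_degree (d - j) I)"
  proof (rule inj_onI, clarsimp simp: ext_def)
    fix j m j' m'
    assume m: "m \<in> monomials_of_degree (d - j) I" and m': "m' \<in> monomials_of_degree (d - j') I"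
      and eq: "m + Poly_Mapping.single l j = m' + Poly_Mapping.single l j'"
    have "Poly_Mapping.lookup (m + Poly_Mapping.single l j) l =
        Poly_Mapping.lookup (m' + Poly_Mapping.single l j') l"
      using eq by simp
    then have "j = j'"
      using lookup_l[OF m] lookup_l[OF m'] by (simp add: lookup_add)
    then show "j = j' \<and> m = m'"
      using eq by simp
  qed
qed

lemma finite_monomials_of_degree: "finite I \<Longrightarrow> finite (monomials_of_degree d I)"
  by (induction I arbitrary: d rule: finite_induct)
    (simp_all add: monomials_of_degree_empty monomials_of_degree_insert(1))

lemma prod_geom_fps_nth:
  "finite I \<Longrightarrow> (\<Prod>l\<in>I. geom_fps (z l)) $ d = (\<Sum>m\<in>monomials_of_degree d I. eval_monomial m z)"
proof (induction I arbitrary: d rule: finite_induct)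
  case empty
  then show ?case by (simp add: monomials_of_degree_empty)
next
  case (insert l I)
  let ?ext = "\<lambda>(j, m). m + Poly_Mapping.single l j"
  let ?S = "SIGMA j:{..d}. monomials_of_degree (d - j) I"
  have "(\<Prod>l\<in>insert l I. geom_fps (z l)) $ d =
      (\<Sum>j\<le>d. z l ^ j * (\<Sum>m\<in>monomials_of_degree (d - j) I. eval_monomial m z))"
    using insert by (simp add: fps_mult_nth atLeast0AtMost)
  also have "\<dots> = (\<Sum>j\<le>d. \<Sum>m\<in>monomials_of_degree (d - j) I. eval_monomial (m + Poly_Mapping.single l j) z)"
    by (simp add: sum_distrib_left eval_monomial_add mult.commute)
  also have "\<dots> = (\<Sum>x\<in>?S. eval_monomial (?ext x) z)"
    by (subst sum.Sigma) (auto intro: finite_monomials_of_degree insert.hyps simp: case_prod_beta)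
  also have "\<dots> = (\<Sum>m\<in>monomials_of_degree d (insert l I). eval_monomial m z)"
    using sum.reindex[OF monomials_of_degree_insert(2)[OF insert.hyps(2)], of "\<lambda>m. eval_monomial m z"]
      monomials_of_degree_insert(1)[OF insert.hyps(2)]
    by (simp add: comp_def)
  finally show ?case .
qed

lemma hsym_eq: "hsym d i = (\<Sum>m\<in>monomials_of_degree d {1..i}. Poly_Mapping.single m 1)"
  by (simp add: hsym_def monomials_of_degree_def)

lemma keys_hsym: "Poly_Mapping.keys (hsym d i :: 'a::comm_ring_1 mpoly) = monomials_of_degree d {1..i}"
proof -
  have "Poly_Mapping.lookup (hsym d i :: 'a mpoly) m = (if m \<in> monomials_of_degree d {1..i} then 1 else 0)" for m
    using finite_monomials_of_degree[of "{1..i}" d]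
    by (simp add: hsym_eq lookup_sum lookup_single when_def)
  then show ?thesis
    by (auto simp: in_keys_iff split: if_splits)
qed

lemma hsym_nonzero:
  assumes "1 \<le> i"
  shows "(hsym d i :: 'a::comm_ring_1 mpoly) \<noteq> 0"
proof -
  have "Poly_Mapping.single 1 d \<in> monomials_of_degree d {1..i}"
    using assms by (simp add: monomials_of_degree_def)
  then show ?thesis
    by (metis empty_iff keys_hsym keys_zero)
qed

lemma homogeneous_hsym: "homogeneous d (hsym d i)"
  by (simp add: homogeneous_def keys_hsym monomials_of_degree_def)

lemma hsym_in_Pn: "i \<le> n \<Longrightarrow> hsym d i \<in> Pn n"
  by (auto simp: Pn_def keys_hsym monomials_of_degree_def)

lemma hsym_generating_series:
  "Abs_fps (\<lambda>d. eval (hsym d i) z) = (\<Prod>l\<in>{1..i}. geom_fps (z l))"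
  by (rule fps_ext) (simp add: hsym_eq eval_sum prod_geom_fps_nth)

lemma hsym_in_leading_forms:
  fixes \<alpha> :: "nat \<Rightarrow> 'a::field"
  assumes "1 \<le> k" and inj: "inj_on \<alpha> {1..k+i-1}" and i: "i \<in> {1..n}"
  shows "hsym k i \<in> tau ` (vanishing_ideal n (Z n k \<alpha>) - {0})"
proof -
  define A where "A = \<alpha> ` {1..k+i-1}"
  define C where "C = (\<Prod>a\<in>A. lin_fps (- a))"
  show ?thesis
  proof (rule top_component_in_leading_forms[where C = C and p = "\<lambda>e. hsym e i" and d = k])
    show "C $ 0 = 1"
      by (simp add: C_def prod_fps_nth_0)
    show "hsym k i \<noteq> (0 :: 'a mpoly)" "homogeneous e (hsym e i :: 'a mpoly)"
      "(hsym e i :: 'a mpoly) \<in> Pn n" for e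
      using i by (simp_all add: hsym_nonzero homogeneous_hsym hsym_in_Pn)
  next
    fix z assume z: "z \<in> Z n k \<alpha>"
    have injz: "inj_on z {1..i}"
      using z i by (auto simp: Z_def intro: inj_on_subset)
    have "z l \<in> \<alpha> ` {1..k+l-1}" if "l \<in> {1..i}" for l
      using z i that by (auto simp: Z_def)
    then have zA: "z ` {1..i} \<subseteq> A"
      unfolding A_def by (fastforce elim!: imageE)
    have "C * Abs_fps (\<lambda>e. eval (hsym e i) z) = (\<Prod>a\<in>A. lin_fps (- a)) * (\<Prod>a\<in>z ` {1..i}. geom_fps a)"
      unfolding C_def hsym_generating_series prod.reindex[OF injz] comp_def ..
    also have "\<dots> = (\<Prod>a\<in>A - z ` {1..i}. lin_fps (- a))"
      by (rule prod_mult_prod_inverses[OF _ zA]) (simp_all add: A_def lin_fps_geom_fps)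
    finally have C_series: "C * Abs_fps (\<lambda>e. eval (hsym e i) z) = (\<Prod>a\<in>A - z ` {1..i}. lin_fps (- a))" .
    have "card A = k + i - 1"
      using card_image[OF inj] by (simp add: A_def)
    moreover have "card (z ` {1..i}) = i"
      using card_image[OF injz] by simp
    ultimately have "card (A - z ` {1..i}) < k"
      using card_Diff_subset[OF _ zA] \<open>1 \<le> k\<close> i by (simp add: A_def)
    then show "(C * Abs_fps (\<lambda>e. eval (hsym e i) z)) $ k = 0"
      unfolding C_series by (intro prod_lin_fps_nth_above_card) (simp add: A_def)
  qed
qed

section \<open>Elementary symmetric polynomials\<close>

definition card_subsets :: "nat \<Rightarrow> 'b set \<Rightarrow> 'b set set" where
  "card_subsets d I = {S. S \<subseteq> I \<and> card S = d}"

lemma card_subsets_insert: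
  assumes "finite I" "l \<notin> I"
  shows "card_subsets (Suc e) (insert l I) = card_subsets (Suc e) I \<union> insert l ` card_subsets e I"
proof (intro equalityI subsetI)
  fix S assume S: "S \<in> card_subsets (Suc e) (insert l I)"
  then have "finite S"
    using assms finite_subset unfolding card_subsets_def by blast
  then show "S \<in> card_subsets (Suc e) I \<union> insert l ` card_subsets e I"
    using S by (cases "l \<in> S") (auto simp: card_subsets_def intro!: image_eqI[of _ _ "S - {l}"])
next
  fix S assume "S \<in> card_subsets (Suc e) I \<union> insert l ` card_subsets e I"
  then show "S \<in> card_subsets (Suc e) (insert l I)"
    using assms by (auto simp: card_subsets_def intro!: card_insert_disjoint finite_subset[of _ I])
qed

lemma finite_card_subsets: "finite I \<Longrightarrow> finite (card_subsets d I)"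
  unfolding card_subsets_def by (rule finite_subset[of _ "Pow I"]) auto

lemma prod_lin_fps_nth:
  fixes z :: "'b \<Rightarrow> 'a::comm_ring_1"
  shows "finite I \<Longrightarrow> (\<Prod>l\<in>I. lin_fps (z l)) $ d = (\<Sum>S\<in>card_subsets d I. \<Prod>l\<in>S. z l)"
proof (induction I arbitrary: d rule: finite_induct)
  case empty
  have "card_subsets d ({} :: 'b set) = (if d = 0 then {{}} else {})"
    by (auto simp: card_subsets_def)
  then show ?case
    by (cases d) simp_all
next
  case (insert l I)
  have nth: "(\<Prod>l\<in>insert l I. lin_fps (z l)) $ d = (\<Prod>l\<in>I. lin_fps (z l)) $ d +
       (if d = 0 then 0 else z l * (\<Prod>l\<in>I. lin_fps (z l)) $ (d - 1))"
    using insert by (simp add: lin_fps_mult_nth)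
  show ?case
  proof (cases d)
    case 0
    have "card_subsets 0 J = {{}}" if "finite J" for J :: "'b set"
      using that by (auto simp: card_subsets_def dest: finite_subset)
    then show ?thesis
      using nth insert 0 by simp
  next
    case (Suc e)
    have inj: "inj_on (insert l) (card_subsets e I)"
      using insert.hyps(2) by (auto simp: inj_on_def card_subsets_def)
    have "(\<Sum>S\<in>card_subsets d (insert l I). \<Prod>l\<in>S. z l) =
        (\<Sum>S\<in>card_subsets d I. \<Prod>l\<in>S. z l) + (\<Sum>S\<in>insert l ` card_subsets e I. \<Prod>l\<in>S. z l)"
      unfolding Suc card_subsets_insert[OF insert.hyps]
      by (rule sum.union_disjoint) (use finite_card_subsets insert.hyps in \<open>auto simp: card_subsets_def\<close>)
    also have "(\<Sum>S\<in>insert l ` card_subsets e I. \<Prod>l\<in>S. z l) =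
        (\<Sum>S\<in>card_subsets e I. z l * (\<Prod>l\<in>S. z l))"
      unfolding sum.reindex[OF inj]
    proof (intro sum.cong refl)
      fix S assume "S \<in> card_subsets e I"
      then have "finite S" "l \<notin> S"
        using insert.hyps finite_subset by (auto simp: card_subsets_def)
      then show "((\<lambda>S. \<Prod>l\<in>S. z l) \<circ> insert l) S = z l * (\<Prod>l\<in>S. z l)"
        by simp
    qed
    finally show ?thesis
      using nth insert.IH Suc by (simp add: sum_distrib_left)
  qed
qed

definition sqfree_monomial :: "nat set \<Rightarrow> (nat \<Rightarrow>\<^sub>0 nat)" where
  "sqfree_monomial S = (\<Sum>i\<in>S. Poly_Mapping.single i 1)"

lemma prod_Var: "(\<Prod>i\<in>S. Var i) = (Poly_Mapping.single (sqfree_monomial S) 1 :: 'a::comm_ring_1 mpoly)"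
  by (induction S rule: infinite_finite_induct) (simp_all add: sqfree_monomial_def Var_def mult_single)

lemma keys_sqfree_monomial: "finite S \<Longrightarrow> Poly_Mapping.keys (sqfree_monomial S) = S"
  by (auto simp: in_keys_iff sqfree_monomial_def lookup_sum lookup_single when_def split: if_splits)

lemma mdeg_sqfree_monomial: "mdeg (sqfree_monomial S) = card S"
  by (induction S rule: infinite_finite_induct) (simp_all add: sqfree_monomial_def mdeg_add)

lemma esym_eq: "esym d n = (\<Sum>S\<in>card_subsets d {1..n}. Poly_Mapping.single (sqfree_monomial S) 1)"
  by (simp only: esym_def card_subsets_def prod_Var)

lemma keys_esym: "Poly_Mapping.keys (esym d n) \<subseteq> sqfree_monomial ` card_subsets d {1..n}"
  unfolding esym_eq using keys_sum by fastforce

lemma homogeneous_esym: "homogeneous d (esym d n)"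
  unfolding homogeneous_def
proof
  fix m assume "m \<in> Poly_Mapping.keys (esym d n :: 'a mpoly)"
  then obtain S where "S \<in> card_subsets d {1..n}" "m = sqfree_monomial S"
    using keys_esym by blast
  then show "mdeg m = d"
    by (simp add: card_subsets_def mdeg_sqfree_monomial)
qed

lemma esym_in_Pn: "esym d n \<in> Pn n"
  unfolding Pn_def mem_Collect_eq
proof
  fix m assume "m \<in> Poly_Mapping.keys (esym d n :: 'a mpoly)"
  then obtain S where S: "S \<in> card_subsets d {1..n}" and m: "m = sqfree_monomial S"
    using keys_esym by blast
  then have "finite S"
    by (auto simp: card_subsets_def intro: finite_subset)
  then show "Poly_Mapping.keys m \<subseteq> {1..n}"
    using S by (simp add: m keys_sqfree_monomial card_subsets_def)
qed

lemma esym_nonzero: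
  assumes "d \<le> n"
  shows "(esym d n :: 'a::comm_ring_1 mpoly) \<noteq> 0"
proof -
  have "Poly_Mapping.lookup (esym d n :: 'a mpoly) (sqfree_monomial {1..d}) =
      (\<Sum>S\<in>card_subsets d {1..n}. if S = {1..d} then 1 else 0)"
    unfolding esym_eq lookup_sum
  proof (intro sum.cong refl)
    fix S assume "S \<in> card_subsets d {1..n}"
    then have "finite S"
      by (auto simp: card_subsets_def intro: finite_subset)
    then have "sqfree_monomial S = sqfree_monomial {1..d} \<longleftrightarrow> S = {1..d}"
      by (metis finite_atLeastAtMost keys_sqfree_monomial)
    then show "Poly_Mapping.lookup (Poly_Mapping.single (sqfree_monomial S) 1) (sqfree_monomial {1..d}) =
        (if S = {1..d} then 1 else (0 :: 'a))"
      by (simp add: lookup_single when_def)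
  qed
  also have "\<dots> = 1"
    using assms finite_card_subsets[of "{1..n}" d] by (simp add: card_subsets_def)
  finally show ?thesis
    by (metis lookup_zero one_neq_zero)
qed

lemma esym_generating_series:
  "Abs_fps (\<lambda>d. eval (esym d n) z) = (\<Prod>l\<in>{1..n}. lin_fps (z l))"
  by (rule fps_ext) (simp add: esym_def eval_sum eval_prod prod_lin_fps_nth card_subsets_def)

lemma esym_in_leading_forms:
  fixes \<alpha> :: "nat \<Rightarrow> 'a::field"
  assumes inj: "inj_on \<alpha> {1..k}" and d: "n - k < d" "d \<le> n"
  shows "esym d n \<in> tau ` (vanishing_ideal n (Z n k \<alpha>) - {0})"
proof -
  define C where "C = (\<Prod>a\<in>\<alpha> ` {1..k}. geom_fps (- a))"
  show ?thesis
  proof (rule top_component_in_leading_forms[where C = C and p = "\<lambda>e. esym e n" and d = d])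
    show "C $ 0 = 1"
      by (simp add: C_def prod_fps_nth_0)
    show "esym d n \<noteq> (0 :: 'a mpoly)" "homogeneous e (esym e n :: 'a mpoly)"
      "(esym e n :: 'a mpoly) \<in> Pn n" for e
      using d by (simp_all add: esym_nonzero homogeneous_esym esym_in_Pn)
  next
    fix z assume z: "z \<in> Z n k \<alpha>"
    have injz: "inj_on z {1..n}" and \<alpha>z: "\<alpha> ` {1..k} \<subseteq> z ` {1..n}"
      using z by (auto simp: Z_def)
    have "C * Abs_fps (\<lambda>e. eval (esym e n) z) = (\<Prod>b\<in>z ` {1..n}. lin_fps b) * C"
      unfolding esym_generating_series prod.reindex[OF injz] comp_def by (rule mult.commute)
    also have "\<dots> = (\<Prod>b\<in>z ` {1..n} - \<alpha> ` {1..k}. lin_fps b)"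
      unfolding C_def
      by (rule prod_mult_prod_inverses[OF _ \<alpha>z])
        (simp_all add: lin_fps_geom_fps[of "- _", simplified])
    finally have C_series: "C * Abs_fps (\<lambda>e. eval (esym e n) z) = (\<Prod>b\<in>z ` {1..n} - \<alpha> ` {1..k}. lin_fps b)" .
    have "card (z ` {1..n} - \<alpha> ` {1..k}) = n - k"
      using card_Diff_subset[OF _ \<alpha>z] card_image[OF injz] card_image[OF inj] by simp
    then show "(C * Abs_fps (\<lambda>e. eval (esym e n) z)) $ d = 0"
      unfolding C_series using d by (intro prod_lin_fps_nth_above_card) simp_all
  qed
qed

theorem mainTheorem3:
  fixes n k :: nat and \<alpha> :: "nat \<Rightarrow> 'a::field"
  assumes "1 \<le> k" and "k \<le> n"
    and "inj_on \<alpha> {1..n+k-1}"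
  shows "J n k \<subseteq> T n (Z n k \<alpha>)"
proof -
  have "hsym k i \<in> tau ` (vanishing_ideal n (Z n k \<alpha>) - {0})" if "i \<in> {1..n}" for i
    using assms that by (intro hsym_in_leading_forms inj_on_subset[OF assms(3)]) auto
  moreover have "esym d n \<in> tau ` (vanishing_ideal n (Z n k \<alpha>) - {0})" if "d \<in> {n-k+1..n}" for d
    using assms that by (intro esym_in_leading_forms inj_on_subset[OF assms(3)]) auto
  ultimately show ?thesis
    unfolding J_def T_def by (intro ideal_gen_mono) blast
qed

end
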